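(* Let $f$ be a homeomorphism of a compact metric space with the shadowing property such that $f|_{\Omega(f)}$ is expansive. Then $f$ has the L-shadowing property.
   Context: Shadowing: for every $\varepsilon>0$ there is $\delta>0$ such that for every sequence $(x_k)_{k\in\mathbb{Z}}$ with $d(f(x_k),x_{k+1})<\delta$ for all $k$ there is $y$ with $d(f^k(y),x_k)<\varepsilon$ for all $k\in\mathbb{Z}$. L-shadowing: for every $\varepsilon>0$ there is $\delta>0$ such that every sequence $(x_k)_{k\in\mathbb{Z}}$ with $d(f(x_k),x_{k+1})\le\delta$ for all $k$ and $d(f(x_k),x_{k+1})\to0$ as $|k|\to\infty$ admits $z$ with $d(f^k(z),x_k)\le\varepsilon$ for all $k$ and $d(f^k(z),x_k)\to0$ as $|k|\to\infty$. $\Omega(f)$ is the non-wandering set. $f|_{\Omega(f)}$ is expansive if there is $c>0$ such that for all $x\in\Omega(f)$, the only $y\in\Omega(f)$ with $d(f^n(x),f^n(y))\le c$ for all $n\in\mathbb{Z}$ is $y=x$. *)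

theory Defs
  imports "HOL-Analysis.Analysis"
begin

definition iter_int :: "('a \<Rightarrow> 'a) \<Rightarrow> int \<Rightarrow> 'a \<Rightarrow> 'a" where
  "iter_int f k = (if k \<ge> 0 then f ^^ nat k else (inv f) ^^ nat (- k))"

definition shadowing :: "('a::metric_space \<Rightarrow> 'a) \<Rightarrow> bool" where
  "shadowing f \<longleftrightarrow> (\<forall>\<epsilon>>0. \<exists>\<delta>>0. \<forall>x :: int \<Rightarrow> 'a.
     (\<forall>k. dist (f (x k)) (x (k + 1)) < \<delta>) \<longrightarrow>
     (\<exists>y. \<forall>k. dist (iter_int f k y) (x k) < \<epsilon>))"

text \<open>L-shadowing property.  "as |k| \<rightarrow> \<infinity>" is rendered as the limit along the
  cofinite filter on int, i.e. both k \<rightarrow> +\<infinity> and k \<rightarrow> -\<infinity>.\<close>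
definition L_shadowing :: "('a::metric_space \<Rightarrow> 'a) \<Rightarrow> bool" where
  "L_shadowing f \<longleftrightarrow> (\<forall>\<epsilon>>0. \<exists>\<delta>>0. \<forall>x :: int \<Rightarrow> 'a.
     (\<forall>k. dist (f (x k)) (x (k + 1)) \<le> \<delta>) \<and>
     ((\<lambda>k. dist (f (x k)) (x (k + 1))) \<longlongrightarrow> 0) cofinite \<longrightarrow>
     (\<exists>z. (\<forall>k. dist (iter_int f k z) (x k) \<le> \<epsilon>) \<and>
          ((\<lambda>k. dist (iter_int f k z) (x k)) \<longlongrightarrow> 0) cofinite))"

definition nonwandering :: "('a::topological_space \<Rightarrow> 'a) \<Rightarrow> 'a set" where
  "nonwandering f = {x. \<forall>U. open U \<and> x \<in> U \<longrightarrow> (\<exists>n::nat. n \<ge> 1 \<and> (f ^^ n) ` U \<inter> U \<noteq> {})}"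

definition expansive_on :: "('a::metric_space \<Rightarrow> 'a) \<Rightarrow> 'a set \<Rightarrow> bool" where
  "expansive_on f S \<longleftrightarrow> (\<exists>c>0. \<forall>x\<in>S. \<forall>y\<in>S.
     (\<forall>n::int. dist (iter_int f n x) (iter_int f n y) \<le> c) \<longrightarrow> y = x)"

end

theory Submission
  imports Defs
begin

text \<open>Shadow the asymptotic pseudo-orbit x by a point y with precision c/2, where c is an
  expansivity constant on the non-wandering set.  Beyond the finitely many large errors, the tail of
  x glued to an exact orbit is again a pseudo-orbit, so for every \<eta> > 0 some w shadows that tail of
  x with precision \<eta>; on the tail, y and w stay c-close.  By compactness, if their distance did not
  tend to 0, a subsequence of the pair would converge to two distinct points, which are non-wandering
  (as limits of a single orbit) and whose full orbits are c-close: this contradicts expansivity.  Hence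
  y is asymptotic to w, and so to x, in both time directions.\<close>

lemma iter_int_nat: "iter_int f (int n) = f ^^ n"
  by (simp add: iter_int_def)

lemma iter_int_0 [simp]: "iter_int f 0 x = x"
  by (simp add: iter_int_def)

lemma iter_int_1 [simp]: "iter_int f 1 x = f x"
  by (simp add: iter_int_def)

lemma iter_int_succ:
  assumes "bij f"
  shows "iter_int f (n + 1) x = f (iter_int f n x)"
proof (cases "n \<ge> 0")
  case True
  then have "nat (n + 1) = Suc (nat n)" by simp
  with True show ?thesis by (simp add: iter_int_def)
next
  case False
  then consider "n = -1" | "nat (- n) = Suc (nat (- (n + 1)))" "n + 1 < 0" by linarith
  then show ?thesis
    using False assms by cases (simp_all add: iter_int_def bij_is_surj surj_f_inv_f)
qed

lemma iter_int_pred: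
  assumes "bij f"
  shows "iter_int f (n - 1) x = inv f (iter_int f n x)"
  using iter_int_succ[OF assms, of "n - 1" x] assms by (simp add: bij_is_inj)

lemma iter_int_add:
  assumes "bij f"
  shows "iter_int f (m + n) x = iter_int f m (iter_int f n x)"
proof (induction m rule: int_induct[of _ 0])
  case (step1 i)
  then show ?case
    using iter_int_succ[OF assms, of "i + n"] iter_int_succ[OF assms, of i]
    by (simp add: algebra_simps)
next
  case (step2 i)
  then show ?case
    using iter_int_pred[OF assms, of "i + n"] iter_int_pred[OF assms, of i]
    by (simp add: algebra_simps)
qed simp

lemma iter_int_eq_funpow_diff:
  assumes "bij f" and "u \<le> v"
  shows "iter_int f v x = (f ^^ nat (v - u)) (iter_int f u x)"
proof -
  have "v = int (nat (v - u)) + u" using assms(2) by simp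
  then show ?thesis by (metis iter_int_add[OF assms(1)] iter_int_nat)
qed

lemma continuous_on_funpow:
  fixes f :: "'a::topological_space \<Rightarrow> 'a"
  assumes "continuous_on UNIV f"
  shows "continuous_on UNIV (f ^^ n)"
proof (induction n)
  case (Suc n)
  show ?case using continuous_on_compose2[OF assms Suc] by simp
qed (simp add: id_def)

lemma homeomorphism_UNIV_bij:
  assumes "homeomorphism UNIV UNIV f g"
  shows "bij f" and "inv f = g"
proof -
  have fg: "\<And>x. g (f x) = x" "\<And>y. f (g y) = y"
    using assms by (auto simp: homeomorphism_def)
  show "bij f" by (metis bijI' fg)
  show "inv f = g" by (metis fg inv_equality)
qed

lemma continuous_on_iter_int:
  assumes "homeomorphism UNIV UNIV f g"
  shows "continuous_on UNIV (iter_int f n)"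
  using assms homeomorphism_UNIV_bij(2)[OF assms]
  by (auto simp: iter_int_def homeomorphism_def intro: continuous_on_funpow)

definition expansive_constant :: "('a::metric_space \<Rightarrow> 'a) \<Rightarrow> 'a set \<Rightarrow> real \<Rightarrow> bool" where
  "expansive_constant f S c \<longleftrightarrow> (\<forall>x\<in>S. \<forall>y\<in>S.
     (\<forall>n. dist (iter_int f n x) (iter_int f n y) \<le> c) \<longrightarrow> y = x)"

lemma expansive_on_iff: "expansive_on f S \<longleftrightarrow> (\<exists>c>0. expansive_constant f S c)"
  by (simp add: expansive_on_def expansive_constant_def)

lemma nonwandering_if_orbit_limit:
  assumes "bij f" and "inj t" and lim: "(\<lambda>i. iter_int f (t i) a) \<longlonglongrightarrow> p"
  shows "p \<in> nonwandering f"
  unfolding nonwandering_def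
proof (intro CollectI allI impI)
  fix U assume "open U \<and> p \<in> U"
  with lim obtain N where N: "\<And>i. i \<ge> N \<Longrightarrow> iter_int f (t i) a \<in> U"
    by (auto simp: tendsto_def eventually_sequentially)
  define u v where "u = min (t N) (t (Suc N))" and "v = max (t N) (t (Suc N))"
  have "t N \<noteq> t (Suc N)" using \<open>inj t\<close> by (auto dest: injD)
  then have "u < v" by (simp add: u_def v_def)
  have in_U: "iter_int f u a \<in> U" "iter_int f v a \<in> U"
    using N[of N] N[of "Suc N"] by (simp_all add: u_def v_def min_def max_def)
  have "iter_int f v a = (f ^^ nat (v - u)) (iter_int f u a)"
    using iter_int_eq_funpow_diff[OF \<open>bij f\<close>] \<open>u < v\<close> by simp
  with in_U have "iter_int f v a \<in> (f ^^ nat (v - u)) ` U \<inter> U" by auto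
  then show "\<exists>n\<ge>1. (f ^^ n) ` U \<inter> U \<noteq> {}"
    using \<open>u < v\<close> by (intro exI[of _ "nat (v - u)"]) auto
qed

lemma compact_not_asymptotic_limits:
  fixes a b :: "nat \<Rightarrow> 'a::metric_space"
  assumes "compact (UNIV :: 'a set)" and "\<not> (\<lambda>j. dist (a j) (b j)) \<longlonglongrightarrow> 0"
  obtains r p q where "strict_mono r" "(a \<circ> r) \<longlonglongrightarrow> p" "(b \<circ> r) \<longlonglongrightarrow> q" "p \<noteq> q"
proof -
  obtain \<eta> where "\<eta> > 0" and "\<forall>N. \<exists>j\<ge>N. \<eta> \<le> dist (a j) (b j)"
    using assms(2) unfolding LIMSEQ_iff by (auto simp: not_less)
  then have "infinite {j. \<eta> \<le> dist (a j) (b j)}"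
    by (simp add: infinite_nat_iff_unbounded_le)
  then obtain r0 :: "nat \<Rightarrow> nat"
    where "strict_mono r0" and far: "\<And>i. \<eta> \<le> dist (a (r0 i)) (b (r0 i))"
    using infinite_enumerate by blast
  have "compact (UNIV :: ('a \<times> 'a) set)"
    using compact_Times[OF assms(1) assms(1)] by simp
  then obtain l r1 where "strict_mono r1"
    and lim: "((\<lambda>i. (a (r0 i), b (r0 i))) \<circ> r1) \<longlonglongrightarrow> l"
    using seq_compactE[OF compact_imp_seq_compact] by blast
  have A: "(a \<circ> (r0 \<circ> r1)) \<longlonglongrightarrow> fst l" and B: "(b \<circ> (r0 \<circ> r1)) \<longlonglongrightarrow> snd l"
    using tendsto_fst[OF lim] tendsto_snd[OF lim] by (simp_all add: o_def)
  have "\<eta> \<le> dist (fst l) (snd l)"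
    using far by (intro LIMSEQ_le_const[OF tendsto_dist[OF A B]]) auto
  with \<open>\<eta> > 0\<close> have "fst l \<noteq> snd l" by auto
  with A B show ?thesis
    using that strict_mono_o[OF \<open>strict_mono r0\<close> \<open>strict_mono r1\<close>] by blast
qed

lemma dist_iter_int_limits_le:
  assumes hom: "homeomorphism UNIV UNIV f g" and s: "s \<in> {1, -1}" and "strict_mono r"
    and P: "(\<lambda>i. iter_int f (s * int (r i)) a) \<longlonglongrightarrow> p"
    and Q: "(\<lambda>i. iter_int f (s * int (r i)) b) \<longlonglongrightarrow> q"
    and close: "eventually (\<lambda>j. dist (iter_int f (s * int j) a) (iter_int f (s * int j) b) \<le> c) sequentially"
  shows "dist (iter_int f n p) (iter_int f n q) \<le> c"
proof (rule tendsto_upperbound)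
  have "isCont (iter_int f n) x" for x
    using continuous_on_iter_int[OF hom] by (simp add: continuous_on_eq_continuous_at)
  then show "(\<lambda>i. dist (iter_int f n (iter_int f (s * int (r i)) a))
      (iter_int f n (iter_int f (s * int (r i)) b))) \<longlonglongrightarrow> dist (iter_int f n p) (iter_int f n q)"
    by (intro tendsto_dist isCont_tendsto_compose[OF _ P] isCont_tendsto_compose[OF _ Q])
  obtain M where M: "\<And>j. j \<ge> M \<Longrightarrow> dist (iter_int f (s * int j) a) (iter_int f (s * int j) b) \<le> c"
    using close by (auto simp: eventually_sequentially)
  show "eventually (\<lambda>i. dist (iter_int f n (iter_int f (s * int (r i)) a))
      (iter_int f n (iter_int f (s * int (r i)) b)) \<le> c) sequentially"
    unfolding eventually_sequentially
  proof (intro exI allI impI)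
    fix i assume "nat \<bar>n\<bar> + M \<le> i"
    with seq_suble[OF \<open>strict_mono r\<close>, of i] have "int (r i) \<ge> \<bar>n\<bar> + int M" by linarith
    define j where "j = nat (s * n + int (r i))"
    have "n + s * int (r i) = s * int j" and "j \<ge> M"
      using s \<open>int (r i) \<ge> \<bar>n\<bar> + int M\<close> by (auto simp: j_def)
    then show "dist (iter_int f n (iter_int f (s * int (r i)) a))
        (iter_int f n (iter_int f (s * int (r i)) b)) \<le> c"
      using M[of j] by (simp add: iter_int_add[OF homeomorphism_UNIV_bij(1)[OF hom], symmetric])
  qed
qed simp

lemma expansive_constant_asymptotic:
  fixes f :: "'a::metric_space \<Rightarrow> 'a"
  assumes "compact (UNIV :: 'a set)" and hom: "homeomorphism UNIV UNIV f g"
    and exp: "expansive_constant f (nonwandering f) c" and s: "s \<in> {1, -1}"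
    and close: "eventually (\<lambda>j. dist (iter_int f (s * int j) a) (iter_int f (s * int j) b) \<le> c) sequentially"
  shows "(\<lambda>j. dist (iter_int f (s * int j) a) (iter_int f (s * int j) b)) \<longlonglongrightarrow> 0"
proof (rule ccontr)
  assume "\<not> ?thesis"
  then obtain r p q where r: "strict_mono r" and "p \<noteq> q"
    and "((\<lambda>j. iter_int f (s * int j) a) \<circ> r) \<longlonglongrightarrow> p"
    and "((\<lambda>j. iter_int f (s * int j) b) \<circ> r) \<longlonglongrightarrow> q"
    by (rule compact_not_asymptotic_limits[OF assms(1)])
  then have P: "(\<lambda>i. iter_int f (s * int (r i)) a) \<longlonglongrightarrow> p"
    and Q: "(\<lambda>i. iter_int f (s * int (r i)) b) \<longlonglongrightarrow> q"
    by (simp_all add: o_def)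
  have "inj (\<lambda>i. s * int (r i))"
    using s strict_mono_imp_inj_on[OF r] by (auto simp: inj_def)
  then have "p \<in> nonwandering f" "q \<in> nonwandering f"
    using nonwandering_if_orbit_limit[OF homeomorphism_UNIV_bij(1)[OF hom]] P Q by blast+
  moreover have "\<forall>n. dist (iter_int f n p) (iter_int f n q) \<le> c"
    using dist_iter_int_limits_le[OF hom s r P Q close] by blast
  ultimately show False
    using exp \<open>p \<noteq> q\<close> by (auto simp: expansive_constant_def)
qed

lemma shadowing_tail:
  fixes f :: "'a::metric_space \<Rightarrow> 'a" and x :: "int \<Rightarrow> 'a"
  assumes bij: "bij f" and "shadowing f" and s: "s \<in> {1, -1}" and "\<rho> > 0"
    and errors: "((\<lambda>k. dist (f (x k)) (x (k + 1))) \<longlongrightarrow> 0) cofinite"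
  obtains w M where "\<And>j. j \<ge> M \<Longrightarrow> dist (iter_int f (s * int j) w) (x (s * int j)) < \<rho>"
proof -
  obtain \<delta> where "\<delta> > 0" and shadow: "\<And>x :: int \<Rightarrow> 'a. \<forall>k. dist (f (x k)) (x (k + 1)) < \<delta> \<Longrightarrow>
      \<exists>w. \<forall>k. dist (iter_int f k w) (x k) < \<rho>"
    using \<open>shadowing f\<close> \<open>\<rho> > 0\<close> unfolding shadowing_def by blast
  have "finite {k. \<not> dist (f (x k)) (x (k + 1)) < \<delta>}"
    using order_tendstoD(2)[OF errors \<open>\<delta> > 0\<close>] by (simp add: eventually_cofinite)
  then obtain B where B: "abs ` {k. \<not> dist (f (x k)) (x (k + 1)) < \<delta>} \<subseteq> {..B}"
    unfolding finite_int_iff_bounded_le by blast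
  define M where "M = nat B + 1"
  have small: "dist (f (x k)) (x (k + 1)) < \<delta>" if "\<bar>k\<bar> \<ge> int M" for k
  proof (rule ccontr)
    assume "\<not> ?thesis"
    with B have "\<bar>k\<bar> \<le> B" by auto
    with that show False by (simp add: M_def split: if_splits)
  qed
  \<comment> \<open>keep x on the half-line beyond time s M and replace the rest by an exact orbit\<close>
  define x' where "x' k = (if s * k \<ge> int M then x k else iter_int f (k - s * int M) (x (s * int M)))" for k
  have "dist (f (x' k)) (x' (k + 1)) < \<delta>" for k
  proof (cases "s * k \<ge> int M \<and> s * (k + 1) \<ge> int M")
    case True
    then have "\<bar>k\<bar> \<ge> int M" using s by auto
    with True show ?thesis by (simp add: x'_def small)
  next
    case False
    have "x' (k + 1) = f (x' k)"
    proof (cases "s * k \<ge> int M")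
      case True
      with False s have "s = -1" "k = - int M" by auto
      then show ?thesis by (simp add: x'_def)
    next
      case False
      then have "f (x' k) = iter_int f (k + 1 - s * int M) (x (s * int M))"
        by (simp add: x'_def iter_int_succ[OF bij, symmetric] algebra_simps)
      moreover have "s * (k + 1) \<ge> int M \<Longrightarrow> k + 1 = s * int M" using False s by auto
      ultimately show ?thesis by (auto simp: x'_def)
    qed
    then show ?thesis using \<open>\<delta> > 0\<close> by simp
  qed
  then obtain w where w: "\<And>k. dist (iter_int f k w) (x' k) < \<rho>"
    using shadow by blast
  show ?thesis
  proof (rule that)
    fix j assume "j \<ge> M"
    with s have "x' (s * int j) = x (s * int j)" by (auto simp: x'_def)
    with w show "dist (iter_int f (s * int j) w) (x (s * int j)) < \<rho>" by metis
  qed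
qed

lemma shadowing_asymptotic_half_line:
  fixes f :: "'a::metric_space \<Rightarrow> 'a" and x :: "int \<Rightarrow> 'a"
  assumes "compact (UNIV :: 'a set)" and hom: "homeomorphism UNIV UNIV f g" and "shadowing f"
    and exp: "expansive_constant f (nonwandering f) c" and "c > 0" and s: "s \<in> {1, -1}"
    and y: "\<And>k. dist (iter_int f k y) (x k) \<le> c / 2"
    and errors: "((\<lambda>k. dist (f (x k)) (x (k + 1))) \<longlongrightarrow> 0) cofinite"
  shows "(\<lambda>j. dist (iter_int f (s * int j) y) (x (s * int j))) \<longlonglongrightarrow> 0"
proof (rule LIMSEQ_I)
  fix \<eta> :: real assume "\<eta> > 0"
  define \<rho> where "\<rho> = min \<eta> c / 2"
  have "\<rho> > 0" using \<open>\<eta> > 0\<close> \<open>c > 0\<close> by (simp add: \<rho>_def)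
  \<comment> \<open>y and w are c-close on a tail, so expansivity makes them asymptotic\<close>
  obtain w M where w: "\<And>j. j \<ge> M \<Longrightarrow> dist (iter_int f (s * int j) w) (x (s * int j)) < \<rho>"
    using shadowing_tail[OF homeomorphism_UNIV_bij(1)[OF hom] \<open>shadowing f\<close> s \<open>\<rho> > 0\<close> errors] by blast
  have "dist (iter_int f (s * int j) y) (iter_int f (s * int j) w) \<le> c" if "j \<ge> M" for j
    using dist_triangle2[of "iter_int f (s * int j) y" "iter_int f (s * int j) w" "x (s * int j)"]
      y[of "s * int j"] w[OF that] by (simp add: \<rho>_def)
  then have "(\<lambda>j. dist (iter_int f (s * int j) y) (iter_int f (s * int j) w)) \<longlonglongrightarrow> 0"
    by (intro expansive_constant_asymptotic[OF assms(1) hom exp s]) (auto simp: eventually_sequentially)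
  then obtain N where N: "\<And>j. j \<ge> N \<Longrightarrow> dist (iter_int f (s * int j) y) (iter_int f (s * int j) w) < \<eta> / 2"
    using LIMSEQ_D[of _ 0 "\<eta> / 2"] \<open>\<eta> > 0\<close> by fastforce
  have "dist (iter_int f (s * int j) y) (x (s * int j)) < \<eta>" if "j \<ge> max N M" for j
    using dist_triangle[of "iter_int f (s * int j) y" "x (s * int j)" "iter_int f (s * int j) w"]
      N[of j] w[of j] that by (simp add: \<rho>_def)
  then show "\<exists>N. \<forall>j\<ge>N. norm (dist (iter_int f (s * int j) y) (x (s * int j)) - 0) < \<eta>"
    by (auto intro!: exI[of _ "max N M"])
qed

lemma tendsto_cofinite_int:
  assumes "(\<lambda>j. h (int j)) \<longlonglongrightarrow> l" and "(\<lambda>j. h (- int j)) \<longlonglongrightarrow> l"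
  shows "(h \<longlongrightarrow> l) cofinite"
  unfolding tendsto_def
proof (intro allI impI)
  fix S assume "open S" "l \<in> S"
  with assms have "eventually (\<lambda>j. h (int j) \<in> S) sequentially"
    and "eventually (\<lambda>j. h (- int j) \<in> S) sequentially"
    by (auto simp: tendsto_def)
  then obtain N1 N2 where N1: "\<And>j. j \<ge> N1 \<Longrightarrow> h (int j) \<in> S"
    and N2: "\<And>j. j \<ge> N2 \<Longrightarrow> h (- int j) \<in> S"
    by (auto simp: eventually_sequentially)
  have "h k \<in> S" if "k \<notin> {- int N2 .. int N1}" for k
  proof (cases "k \<ge> 0")
    case True
    then show ?thesis using that N1[of "nat k"] by simp
  next
    case False
    then show ?thesis using that N2[of "nat (- k)"] by simp
  qed
  then have "{k. h k \<notin> S} \<subseteq> {- int N2 .. int N1}" by blast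
  then show "eventually (\<lambda>k. h k \<in> S) cofinite"
    by (simp add: eventually_cofinite finite_subset)
qed

lemma shadowing_asymptotic:
  fixes f :: "'a::metric_space \<Rightarrow> 'a" and x :: "int \<Rightarrow> 'a"
  assumes "compact (UNIV :: 'a set)" and "homeomorphism UNIV UNIV f g" and "shadowing f"
    and "expansive_constant f (nonwandering f) c" and "c > 0"
    and "\<And>k. dist (iter_int f k y) (x k) \<le> c / 2"
    and "((\<lambda>k. dist (f (x k)) (x (k + 1))) \<longlongrightarrow> 0) cofinite"
  shows "((\<lambda>k. dist (iter_int f k y) (x k)) \<longlongrightarrow> 0) cofinite"
proof -
  have "(\<lambda>j. dist (iter_int f (s * int j) y) (x (s * int j))) \<longlonglongrightarrow> 0" if "s \<in> {1, -1}" for s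
    using shadowing_asymptotic_half_line[OF assms(1-5) that assms(6,7)] .
  from this[of 1] this[of "-1"] show ?thesis
    by (intro tendsto_cofinite_int) simp_all
qed

theorem mainTheorem13:
  fixes f :: "'a::metric_space \<Rightarrow> 'a"
  assumes "compact (UNIV :: 'a set)"
    and "homeomorphism UNIV UNIV f g"
    and "shadowing f"
    and "expansive_on f (nonwandering f)"
  shows "L_shadowing f"
  unfolding L_shadowing_def
proof (intro allI impI)
  fix \<epsilon> :: real assume "\<epsilon> > 0"
  obtain c where "c > 0" and exp: "expansive_constant f (nonwandering f) c"
    using assms(4) by (auto simp: expansive_on_iff)
  have "min \<epsilon> (c / 2) > 0" using \<open>\<epsilon> > 0\<close> \<open>c > 0\<close> by simp
  then obtain \<delta> where "\<delta> > 0" and shadow: "\<And>x :: int \<Rightarrow> 'a. \<forall>k. dist (f (x k)) (x (k + 1)) < \<delta> \<Longrightarrow>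
      \<exists>y. \<forall>k. dist (iter_int f k y) (x k) < min \<epsilon> (c / 2)"
    using assms(3) unfolding shadowing_def by blast
  have "\<exists>z. (\<forall>k. dist (iter_int f k z) (x k) \<le> \<epsilon>) \<and>
      ((\<lambda>k. dist (iter_int f k z) (x k)) \<longlongrightarrow> 0) cofinite"
    if errors: "\<forall>k. dist (f (x k)) (x (k + 1)) \<le> \<delta> / 2"
      and errors_lim: "((\<lambda>k. dist (f (x k)) (x (k + 1))) \<longlongrightarrow> 0) cofinite" for x
  proof -
    have "dist (f (x k)) (x (k + 1)) < \<delta>" for k
      using errors[rule_format, of k] \<open>\<delta> > 0\<close> by linarith
    then obtain y where y: "\<And>k. dist (iter_int f k y) (x k) < min \<epsilon> (c / 2)"
      using shadow by blast
    then have "((\<lambda>k. dist (iter_int f k y) (x k)) \<longlongrightarrow> 0) cofinite"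
      by (intro shadowing_asymptotic[OF assms(1-3) exp \<open>c > 0\<close> _ errors_lim]) (simp add: less_imp_le)
    with y show ?thesis by (meson less_imp_le min_less_iff_conj)
  qed
  then show "\<exists>\<delta>>0. \<forall>x. (\<forall>k. dist (f (x k)) (x (k + 1)) \<le> \<delta>) \<and>
      ((\<lambda>k. dist (f (x k)) (x (k + 1))) \<longlongrightarrow> 0) cofinite \<longrightarrow>
      (\<exists>z. (\<forall>k. dist (iter_int f k z) (x k) \<le> \<epsilon>) \<and>
        ((\<lambda>k. dist (iter_int f k z) (x k)) \<longlongrightarrow> 0) cofinite)"
    using \<open>\<delta> > 0\<close> by (intro exI[of _ "\<delta> / 2"]) auto
qed

end
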